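(* For every density operator $\rho$ on $\mathbb{C}^d$, $C_{\mathcal{F}}(\rho)\le N_c(\rho)/d$.
   Context: Fix the computational basis $\{|i\rangle\}_{i=0}^{d-1}$ of $\mathbb{C}^d$ as the incoherent basis. A maximally coherent state is a pure state $\frac1{\sqrt d}\sum_{i}e^{\mathrm{i}\theta_i}|i\rangle$; the quantum coherence fraction is $C_{\mathcal{F}}(\rho)=\max_{|\phi\rangle\text{ maximally coherent}}\langle\phi|\rho|\phi\rangle$. The coherence rank $R_c(|\psi\rangle)$ of a pure state is the number of nonzero coefficients of $|\psi\rangle$ in the incoherent basis. The coherence number is $N_c(\rho)=\min_{\{p_i,|\psi_i\rangle\}}\max_i R_c(|\psi_i\rangle)$, the minimum over all decompositions $\rho=\sum_ip_i|\psi_i\rangle\langle\psi_i|$ into pure states with $p_i>0$. *)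

theory Defs
  imports "HOL-Analysis.Analysis"
begin

text \<open>Operators on C^d are represented as matrices indexed by a finite type 'n,
  with d = CARD('n); the incoherent basis is the standard basis indexed by 'n.
  Vectors are functions 'n => complex.\<close>

definition density_op :: "('n::finite \<Rightarrow> 'n \<Rightarrow> complex) \<Rightarrow> bool" where
  "density_op \<rho> \<longleftrightarrow>
     (\<forall>i j. \<rho> j i = cnj (\<rho> i j)) \<and>
     (\<forall>v::'n \<Rightarrow> complex. 0 \<le> Re (\<Sum>i\<in>UNIV. \<Sum>j\<in>UNIV. cnj (v i) * \<rho> i j * v j)) \<and>
     (\<Sum>i\<in>UNIV. \<rho> i i) = 1"

definition coherence_rank :: "('n::finite \<Rightarrow> complex) \<Rightarrow> nat" where
  "coherence_rank \<psi> = card {i. \<psi> i \<noteq> 0}"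

definition pure_decomposition ::
  "('n::finite \<Rightarrow> 'n \<Rightarrow> complex) \<Rightarrow> (real \<times> ('n \<Rightarrow> complex)) list \<Rightarrow> bool" where
  "pure_decomposition \<rho> E \<longleftrightarrow>
     (\<forall>(p, \<psi>) \<in> set E. p > 0 \<and> (\<Sum>i\<in>UNIV. (cmod (\<psi> i))\<^sup>2) = 1) \<and>
     \<rho> = (\<lambda>i j. \<Sum>(p, \<psi>) \<leftarrow> E. complex_of_real p * \<psi> i * cnj (\<psi> j))"

definition coherence_number :: "('n::finite \<Rightarrow> 'n \<Rightarrow> complex) \<Rightarrow> nat" where
  "coherence_number \<rho> =
     Inf {Max (insert 0 ((\<lambda>(p, \<psi>). coherence_rank \<psi>) ` set E)) | E. pure_decomposition \<rho> E}"

definition max_coherent_state :: "('n::finite \<Rightarrow> real) \<Rightarrow> ('n \<Rightarrow> complex)" where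
  "max_coherent_state \<theta> = (\<lambda>i. exp (\<i> * complex_of_real (\<theta> i)) / complex_of_real (sqrt (real CARD('n))))"

definition coherence_fraction :: "('n::finite \<Rightarrow> 'n \<Rightarrow> complex) \<Rightarrow> real" where
  "coherence_fraction \<rho> =
     (SUP \<theta> :: 'n \<Rightarrow> real. Re (\<Sum>i\<in>UNIV. \<Sum>j\<in>UNIV. cnj (max_coherent_state \<theta> i) * \<rho> i j * max_coherent_state \<theta> j))"

end

theory Submission
  imports Defs
begin

(* Take a pure-state decomposition rho = sum_k p_k |psi_k><psi_k| attaining N_c(rho).  For a
   maximally coherent phi, <phi|rho|phi> = sum_k p_k |<phi|psi_k>|^2, and Cauchy-Schwarz on the
   support of psi_k, together with |phi_i|^2 = 1/d, gives |<phi|psi_k>|^2 <= R_c(psi_k)/d <= N_c(rho)/d;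
   the weights p_k sum to tr rho = 1.  That rho has a pure-state decomposition at all is a
   Cholesky-type factorisation: subtracting u u^* for u the k-th column scaled by 1/sqrt(rho_kk)
   keeps the matrix positive semidefinite and removes k from the support of its diagonal. *)

definition sesq ::
    "('n::finite \<Rightarrow> 'n \<Rightarrow> complex) \<Rightarrow> ('n \<Rightarrow> complex) \<Rightarrow> ('n \<Rightarrow> complex) \<Rightarrow> complex"
  where "sesq A x y = (\<Sum>i\<in>UNIV. \<Sum>j\<in>UNIV. cnj (x i) * A i j * y j)"

definition cinner :: "('n::finite \<Rightarrow> complex) \<Rightarrow> ('n \<Rightarrow> complex) \<Rightarrow> complex"
  where "cinner x y = (\<Sum>i\<in>UNIV. cnj (x i) * y i)"

definition sqnorm :: "('n::finite \<Rightarrow> complex) \<Rightarrow> real"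
  where "sqnorm x = (\<Sum>i\<in>UNIV. (cmod (x i))\<^sup>2)"

definition basis_vec :: "'n \<Rightarrow> 'n \<Rightarrow> complex"
  where "basis_vec k = (\<lambda>i. if i = k then 1 else 0)"

definition positive_semidef :: "('n::finite \<Rightarrow> 'n \<Rightarrow> complex) \<Rightarrow> bool"
  where "positive_semidef A \<longleftrightarrow> (\<forall>i j. A j i = cnj (A i j)) \<and> (\<forall>v. 0 \<le> Re (sesq A v v))"

lemma density_op_iff:
  "density_op \<rho> \<longleftrightarrow> positive_semidef \<rho> \<and> (\<Sum>i\<in>UNIV. \<rho> i i) = 1"
  unfolding density_op_def positive_semidef_def sesq_def by blast

lemma cinner_swap: "cinner y x = cnj (cinner x y)"
  unfolding cinner_def by (simp add: mult.commute)

lemma sesq_swap: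
  assumes "\<forall>i j. A j i = cnj (A i j)"
  shows "sesq A y x = cnj (sesq A x y)"
proof -
  have "cnj (sesq A x y) = (\<Sum>i\<in>UNIV. \<Sum>j\<in>UNIV. x i * A j i * cnj (y j))"
    unfolding sesq_def by (simp add: assms[rule_format, symmetric])
  also have "\<dots> = sesq A y x"
    unfolding sesq_def by (subst sum.swap) (simp add: ac_simps)
  finally show ?thesis ..
qed

lemma sesq_basis_left: "sesq A (basis_vec k) y = (\<Sum>j\<in>UNIV. A k j * y j)"
proof -
  have "(\<Sum>j\<in>UNIV. cnj (basis_vec k i) * A i j * y j)
      = (if i = k then \<Sum>j\<in>UNIV. A k j * y j else 0)" for i
    by (simp add: basis_vec_def)
  then show ?thesis unfolding sesq_def by simp
qed

lemma sum_mult_basis_vec: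
  fixes f :: "'n::finite \<Rightarrow> complex"
  shows "(\<Sum>l\<in>UNIV. f l * basis_vec j l) = f j"
proof -
  have "(\<Sum>l\<in>UNIV. f l * basis_vec j l) = (\<Sum>l\<in>UNIV. if l = j then f j else 0)"
    by (rule sum.cong) (auto simp: basis_vec_def)
  then show ?thesis by simp
qed

lemma sesq_basis_basis: "sesq A (basis_vec i) (basis_vec j) = A i j"
  by (simp add: sesq_basis_left sum_mult_basis_vec)

lemma sesq_add_matrix: "sesq (\<lambda>i j. A i j + B i j) x y = sesq A x y + sesq B x y"
  unfolding sesq_def by (simp add: algebra_simps sum.distrib)

lemma sesq_diff_matrix: "sesq (\<lambda>i j. A i j - B i j) x y = sesq A x y - sesq B x y"
  unfolding sesq_def by (simp add: algebra_simps sum_subtractf)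

lemma sesq_scale_matrix: "sesq (\<lambda>i j. c * A i j) x y = c * sesq A x y"
  unfolding sesq_def by (simp add: sum_distrib_left ac_simps)

lemma sesq_outer: "sesq (\<lambda>i j. u i * cnj (u j)) x y = cinner x u * cinner u y"
  unfolding sesq_def cinner_def by (simp add: sum_product algebra_simps)

lemma sesq_add_scaled:
  "sesq A (\<lambda>i. x i + t * y i) (\<lambda>i. x i + t * y i)
     = sesq A x x + t * sesq A x y + cnj t * sesq A y x + cnj t * t * sesq A y y"
  unfolding sesq_def
  by (simp add: algebra_simps sum.distrib sum_distrib_left)

lemma nonneg_quadratic_bound:
  fixes a m q :: real
  assumes "\<And>s. 0 \<le> q - 2 * s * m + s\<^sup>2 * m * a" and "0 \<le> a" and "0 \<le> m"
  shows "m \<le> a * q"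
proof (cases "a = 0")
  case True
  have "0 \<le> q - 2 * ((q + 1) / (2 * m)) * m" if "m > 0"
    using assms(1)[of "(q + 1) / (2 * m)"] True by simp
  moreover have "0 \<le> q" using assms(1)[of 0] by simp
  ultimately show ?thesis using True \<open>0 \<le> m\<close> by (cases "m = 0") auto
next
  case False
  then have "0 \<le> q - m / a" using assms(1)[of "1 / a"] \<open>0 \<le> a\<close>
    by (simp add: power2_eq_square field_simps)
  then show ?thesis using False \<open>0 \<le> a\<close> by (simp add: field_simps)
qed

lemma psd_cauchy_schwarz:
  assumes "positive_semidef A"
  shows "(cmod (sesq A x y))\<^sup>2 \<le> Re (sesq A x x) * Re (sesq A y y)"
proof -
  have herm: "\<forall>i j. A j i = cnj (A i j)" and pos: "\<And>v. 0 \<le> Re (sesq A v v)"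
    using assms unfolding positive_semidef_def by blast+
  define b where "b = sesq A x y"
  have "0 \<le> Re (sesq A x x) - 2 * s * (cmod b)\<^sup>2 + s\<^sup>2 * (cmod b)\<^sup>2 * Re (sesq A y y)" for s :: real
  proof -
    define t where "t = - of_real s * cnj b"
    have tb: "Re (t * b) = - s * (cmod b)\<^sup>2"
      unfolding t_def cmod_power2 by (simp add: power2_eq_square algebra_simps)
    have nt: "(cmod t)\<^sup>2 = s\<^sup>2 * (cmod b)\<^sup>2"
      unfolding t_def by (simp add: norm_mult power_mult_distrib)
    have "0 \<le> Re (sesq A (\<lambda>i. x i + t * y i) (\<lambda>i. x i + t * y i))"
      by (rule pos)
    also have "\<dots> = Re (sesq A x x) + 2 * Re (t * b) + (cmod t)\<^sup>2 * Re (sesq A y y)"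
      unfolding sesq_add_scaled sesq_swap[OF herm, of y x] b_def[symmetric]
      by (simp add: mult.commute[of "cnj t"] flip: complex_norm_square)
    also have "\<dots> = Re (sesq A x x) - 2 * s * (cmod b)\<^sup>2 + s\<^sup>2 * (cmod b)\<^sup>2 * Re (sesq A y y)"
      unfolding tb nt by simp
    finally show ?thesis .
  qed
  from nonneg_quadratic_bound[OF this] show ?thesis
    unfolding b_def by (simp add: pos mult.commute)
qed

lemma psd_diag_real: "positive_semidef A \<Longrightarrow> A k k = of_real (Re (A k k))"
  unfolding positive_semidef_def by (metis Reals_cnj_iff of_real_Re)

lemma psd_diag_nonneg: "positive_semidef A \<Longrightarrow> 0 \<le> Re (A k k)"
  unfolding positive_semidef_def by (metis sesq_basis_basis)

lemma psd_entry_bound: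
  "positive_semidef A \<Longrightarrow> (cmod (A i j))\<^sup>2 \<le> Re (A i i) * Re (A j j)"
  using psd_cauchy_schwarz[of A "basis_vec i" "basis_vec j"] by (simp add: sesq_basis_basis)

(* For A k k = 0 the division by zero makes the pivot column vanish, so psd_pivot_update
   needs no hypothesis on the pivot. *)
definition pivot_column :: "('n \<Rightarrow> 'n \<Rightarrow> complex) \<Rightarrow> 'n \<Rightarrow> 'n \<Rightarrow> complex"
  where "pivot_column A k = (\<lambda>j. A j k / of_real (sqrt (Re (A k k))))"

lemma cinner_pivot_column:
  assumes "positive_semidef A"
  shows "cinner (pivot_column A k) v = sesq A (basis_vec k) v / of_real (sqrt (Re (A k k)))"
proof -
  have "cnj (A j k) = A k j" for j
    using assms unfolding positive_semidef_def by metis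
  then show ?thesis
    unfolding cinner_def pivot_column_def sesq_basis_left by (simp add: sum_divide_distrib)
qed

lemma psd_pivot_update:
  fixes A :: "'n::finite \<Rightarrow> 'n \<Rightarrow> complex" and k :: 'n
  assumes psd: "positive_semidef A"
  defines "u \<equiv> pivot_column A k"
  shows "positive_semidef (\<lambda>i j. A i j - u i * cnj (u j))"
  unfolding positive_semidef_def
proof safe
  have "cnj (A i j) = A j i" for i j
    using psd unfolding positive_semidef_def by metis
  then show "A j i - u j * cnj (u i) = cnj (A i j - u i * cnj (u j))" for i j
    by (simp add: mult.commute)
next
  fix v
  define a where "a = Re (A k k)"
  have a: "0 \<le> a" unfolding a_def by (rule psd_diag_nonneg[OF psd])
  have "(cmod (sesq A (basis_vec k) v))\<^sup>2 \<le> a * Re (sesq A v v)"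
    using psd_cauchy_schwarz[OF psd, of "basis_vec k" v] by (simp add: sesq_basis_basis a_def)
  moreover have "0 \<le> Re (sesq A v v)"
    using psd unfolding positive_semidef_def by blast
  ultimately have "(cmod (cinner u v))\<^sup>2 \<le> Re (sesq A v v)"
    using a unfolding u_def cinner_pivot_column[OF psd] a_def[symmetric]
    by (cases "a = 0") (auto simp: norm_divide field_simps)
  moreover have "Re (sesq (\<lambda>i j. A i j - u i * cnj (u j)) v v)
      = Re (sesq A v v) - (cmod (cinner u v))\<^sup>2"
    unfolding sesq_diff_matrix sesq_outer cinner_swap[of v u]
    by (simp add: mult.commute[of "cnj _"] flip: complex_norm_square)
  ultimately show "0 \<le> Re (sesq (\<lambda>i j. A i j - u i * cnj (u j)) v v)" by simp
qed

lemma pivot_update_diag_support: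
  fixes A :: "'n::finite \<Rightarrow> 'n \<Rightarrow> complex" and k :: 'n
  assumes psd: "positive_semidef A" and pivot: "A k k \<noteq> 0"
  defines "u \<equiv> pivot_column A k"
  shows "{i. A i i - u i * cnj (u i) \<noteq> 0} \<subset> {i. A i i \<noteq> 0}"
proof -
  define a where "a = Re (A k k)"
  have Akk: "A k k = of_real a" unfolding a_def by (rule psd_diag_real[OF psd])
  have sqrt_a: "of_real (sqrt a) * of_real (sqrt a) = (of_real a :: complex)"
    using psd_diag_nonneg[OF psd, of k] unfolding a_def by (simp flip: of_real_mult)
  have u_sq: "u i * cnj (u i) = of_real ((cmod (A i k))\<^sup>2 / a)" for i
    by (simp add: u_def pivot_column_def a_def[symmetric] sqrt_a flip: complex_norm_square)
  have "A i i - u i * cnj (u i) = 0" if "A i i = 0" for i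
    using psd_entry_bound[OF psd, of i k] that by (simp add: u_sq)
  moreover have "A k k - u k * cnj (u k) = 0"
    using pivot unfolding u_sq Akk by (simp add: power2_eq_square)
  ultimately show ?thesis using pivot by blast
qed

definition mixture :: "(real \<times> ('n \<Rightarrow> complex)) list \<Rightarrow> 'n \<Rightarrow> 'n \<Rightarrow> complex"
  where "mixture E = (\<lambda>i j. \<Sum>(p, \<psi>)\<leftarrow>E. of_real p * \<psi> i * cnj (\<psi> j))"

lemma pure_decomposition_iff:
  "pure_decomposition \<rho> E \<longleftrightarrow> (\<forall>(p, \<psi>) \<in> set E. 0 < p \<and> sqnorm \<psi> = 1) \<and> \<rho> = mixture E"
  unfolding pure_decomposition_def mixture_def sqnorm_def ..

lemma pure_decomposition_Nil: "pure_decomposition (\<lambda>i j. 0) []"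
  unfolding pure_decomposition_def by simp

lemma pure_decomposition_Cons:
  assumes "0 < p" and "sqnorm \<psi> = 1" and "pure_decomposition B E"
  shows "pure_decomposition (\<lambda>i j. of_real p * \<psi> i * cnj (\<psi> j) + B i j) ((p, \<psi>) # E)"
  using assms unfolding pure_decomposition_def sqnorm_def by simp

lemma outer_normalize:
  fixes u :: "'n::finite \<Rightarrow> complex"
  assumes "u k \<noteq> 0"
  obtains p \<psi> where "0 < p" "sqnorm \<psi> = 1" "\<And>i j. u i * cnj (u j) = of_real p * \<psi> i * cnj (\<psi> j)"
proof
  show p: "0 < sqnorm u"
    unfolding sqnorm_def using assms by (intro sum_pos2[of UNIV k]) auto
  show "sqnorm (\<lambda>i. u i / of_real (sqrt (sqnorm u))) = 1"
    using p unfolding sqnorm_def by (simp add: norm_divide power_divide flip: sum_divide_distrib)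
  show "u i * cnj (u j) = of_real (sqnorm u) * (u i / of_real (sqrt (sqnorm u)))
      * cnj (u j / of_real (sqrt (sqnorm u)))" for i j
    using p by (simp add: field_simps flip: of_real_mult)
qed

theorem psd_has_pure_decomposition:
  fixes A :: "'n::finite \<Rightarrow> 'n \<Rightarrow> complex"
  assumes "positive_semidef A"
  shows "\<exists>E. pure_decomposition A E"
  using assms
proof (induction "card {i. A i i \<noteq> 0}" arbitrary: A rule: less_induct)
  case less
  show ?case
  proof (cases "\<exists>k. A k k \<noteq> 0")
    case False
    then have "A = (\<lambda>i j. 0)"
      using psd_entry_bound[OF less.prems] by (intro ext) simp
    then show ?thesis using pure_decomposition_Nil by blast
  next
    case True
    then obtain k where pivot: "A k k \<noteq> 0" by blast
    define u where "u = pivot_column A k"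
    define B where "B = (\<lambda>i j. A i j - u i * cnj (u j))"
    have "card {i. B i i \<noteq> 0} < card {i. A i i \<noteq> 0}"
      unfolding B_def u_def by (intro psubset_card_mono pivot_update_diag_support less.prems pivot) simp
    moreover have "positive_semidef B"
      unfolding B_def u_def by (rule psd_pivot_update[OF less.prems])
    ultimately obtain E where E: "pure_decomposition B E"
      using less.hyps by blast
    have "u k \<noteq> 0"
      using pivot psd_diag_real[OF less.prems, of k] by (auto simp: u_def pivot_column_def)
    then obtain p \<psi> where "0 < p" "sqnorm \<psi> = 1"
      and u: "\<And>i j. u i * cnj (u j) = of_real p * \<psi> i * cnj (\<psi> j)"
      using outer_normalize by blast
    moreover have "A = (\<lambda>i j. of_real p * \<psi> i * cnj (\<psi> j) + B i j)"
      unfolding B_def by (simp flip: u)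
    ultimately show ?thesis using pure_decomposition_Cons E by blast
  qed
qed

lemma sesq_mixture:
  "Re (sesq (mixture E) \<phi> \<phi>) = (\<Sum>(p, \<psi>)\<leftarrow>E. p * (cmod (cinner \<phi> \<psi>))\<^sup>2)"
proof (induction E)
  case Nil
  then show ?case by (simp add: mixture_def sesq_def)
next
  case (Cons e E)
  obtain p \<psi> where e: "e = (p, \<psi>)" by fastforce
  have "sesq (\<lambda>i j. of_real p * \<psi> i * cnj (\<psi> j)) \<phi> \<phi> = of_real (p * (cmod (cinner \<phi> \<psi>))\<^sup>2)"
    using sesq_scale_matrix[of "of_real p" "\<lambda>i j. \<psi> i * cnj (\<psi> j)"]
    by (simp add: mult.assoc sesq_outer cinner_swap[of \<psi> \<phi>] flip: complex_norm_square)
  then show ?case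
    using Cons.IH unfolding e mixture_def by (simp add: sesq_add_matrix)
qed

lemma trace_mixture: "(\<Sum>i\<in>UNIV. mixture E i i) = of_real (\<Sum>(p, \<psi>)\<leftarrow>E. p * sqnorm \<psi>)"
proof (induction E)
  case Nil
  then show ?case by (simp add: mixture_def)
next
  case (Cons e E)
  obtain p \<psi> where e: "e = (p, \<psi>)" by fastforce
  have "(\<Sum>i\<in>UNIV. of_real p * \<psi> i * cnj (\<psi> i)) = of_real (p * sqnorm \<psi>)"
    unfolding sqnorm_def by (simp add: sum_distrib_left mult.assoc flip: complex_norm_square)
  then show ?case
    using Cons.IH unfolding e mixture_def by (simp add: sum.distrib)
qed

lemma pure_decomposition_weights_sum:
  assumes "pure_decomposition \<rho> E" and "(\<Sum>i\<in>UNIV. \<rho> i i) = 1"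
  shows "(\<Sum>(p, \<psi>)\<leftarrow>E. p) = 1"
proof -
  have "(\<Sum>(p, \<psi>)\<leftarrow>E. p * sqnorm \<psi>) = (\<Sum>(p, \<psi>)\<leftarrow>E. p)"
    using assms(1) unfolding pure_decomposition_iff
    by (intro arg_cong[where f = sum_list] map_cong) auto
  then show ?thesis
    using assms trace_mixture[of E] unfolding pure_decomposition_iff by simp
qed

lemma cinner_support_bound:
  "(cmod (cinner \<phi> \<psi>))\<^sup>2 \<le> (\<Sum>i\<in>{i. \<psi> i \<noteq> 0}. (cmod (\<phi> i))\<^sup>2) * sqnorm \<psi>"
proof -
  let ?S = "{i. \<psi> i \<noteq> 0}"
  have "cinner \<phi> \<psi> = (\<Sum>i\<in>?S. cnj (\<phi> i) * \<psi> i)"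
    unfolding cinner_def by (rule sum.mono_neutral_right) auto
  then have "cmod (cinner \<phi> \<psi>) \<le> (\<Sum>i\<in>?S. cmod (\<phi> i) * cmod (\<psi> i))"
    by (simp add: norm_mult order_trans[OF norm_sum])
  then have "(cmod (cinner \<phi> \<psi>))\<^sup>2 \<le> (\<Sum>i\<in>?S. cmod (\<phi> i) * cmod (\<psi> i))\<^sup>2"
    by (simp add: power_mono)
  also have "\<dots> \<le> (\<Sum>i\<in>?S. (cmod (\<phi> i))\<^sup>2) * (\<Sum>i\<in>?S. (cmod (\<psi> i))\<^sup>2)"
    by (rule Cauchy_Schwarz_ineq_sum)
  also have "(\<Sum>i\<in>?S. (cmod (\<psi> i))\<^sup>2) = sqnorm \<psi>"
    unfolding sqnorm_def by (rule sum.mono_neutral_left) auto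
  finally show ?thesis .
qed

lemma max_coherent_overlap:
  fixes \<psi> :: "'n::finite \<Rightarrow> complex"
  shows "(cmod (cinner (max_coherent_state \<theta>) \<psi>))\<^sup>2
    \<le> real (coherence_rank \<psi>) * sqnorm \<psi> / real CARD('n)"
proof -
  have "(cmod (max_coherent_state \<theta> i))\<^sup>2 = 1 / real CARD('n)" for i :: 'n
    unfolding max_coherent_state_def by (simp add: norm_divide power_divide)
  then show ?thesis
    using cinner_support_bound[of "max_coherent_state \<theta>" \<psi>] by (simp add: coherence_rank_def)
qed

(* Inf {} = 0 on nat, so the theorem genuinely needs a pure-state decomposition to exist. *)
lemma coherence_number_attained:
  assumes "positive_semidef \<rho>"
  obtains E where "pure_decomposition \<rho> E" "\<forall>(p, \<psi>) \<in> set E. coherence_rank \<psi> \<le> coherence_number \<rho>"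
proof -
  let ?M = "{Max (insert 0 ((\<lambda>(p, \<psi>). coherence_rank \<psi>) ` set E)) | E. pure_decomposition \<rho> E}"
  have "coherence_number \<rho> \<in> ?M"
    unfolding coherence_number_def using psd_has_pure_decomposition[OF assms]
    by (intro Inf_nat_def1) blast
  then obtain E where "pure_decomposition \<rho> E"
    and "coherence_number \<rho> = Max (insert 0 ((\<lambda>(p, \<psi>). coherence_rank \<psi>) ` set E))"
    by blast
  then show ?thesis
    by (intro that) (auto intro!: Max_ge)
qed

lemma max_coherent_expectation_bound:
  fixes \<rho> :: "'n::finite \<Rightarrow> 'n \<Rightarrow> complex"
  assumes E: "pure_decomposition \<rho> E" and trace: "(\<Sum>i\<in>UNIV. \<rho> i i) = 1"
    and rank: "\<forall>(p, \<psi>) \<in> set E. coherence_rank \<psi> \<le> N"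
  shows "Re (sesq \<rho> (max_coherent_state \<theta>) (max_coherent_state \<theta>)) \<le> real N / real CARD('n)"
proof -
  have "Re (sesq \<rho> (max_coherent_state \<theta>) (max_coherent_state \<theta>))
      = (\<Sum>(p, \<psi>)\<leftarrow>E. p * (cmod (cinner (max_coherent_state \<theta>) \<psi>))\<^sup>2)"
    using E unfolding pure_decomposition_iff by (simp add: sesq_mixture)
  also have "\<dots> \<le> (\<Sum>(p, \<psi>)\<leftarrow>E. p * (real N / real CARD('n)))"
  proof (rule sum_list_mono, clarify)
    fix p \<psi> assume "(p, \<psi>) \<in> set E"
    then have "0 < p" and "sqnorm \<psi> = 1" and "coherence_rank \<psi> \<le> N"
      using E rank unfolding pure_decomposition_iff by auto
    have "(cmod (cinner (max_coherent_state \<theta>) \<psi>))\<^sup>2 \<le> real (coherence_rank \<psi>) / real CARD('n)"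
      using max_coherent_overlap[of \<theta> \<psi>] \<open>sqnorm \<psi> = 1\<close> by simp
    also have "\<dots> \<le> real N / real CARD('n)"
      using \<open>coherence_rank \<psi> \<le> N\<close> by (simp add: divide_right_mono)
    finally show "p * (cmod (cinner (max_coherent_state \<theta>) \<psi>))\<^sup>2 \<le> p * (real N / real CARD('n))"
      by (rule mult_left_mono) (use \<open>0 < p\<close> in simp)
  qed
  also have "\<dots> = (\<Sum>(p, \<psi>)\<leftarrow>E. p) * (real N / real CARD('n))"
    by (induction E) (auto simp: algebra_simps)
  also have "\<dots> = real N / real CARD('n)"
    using pure_decomposition_weights_sum[OF E trace] by simp
  finally show ?thesis .
qed

theorem mainTheorem5:
  fixes \<rho> :: "'n::finite \<Rightarrow> 'n \<Rightarrow> complex"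
  assumes "density_op \<rho>"
  shows "coherence_fraction \<rho> \<le> real (coherence_number \<rho>) / real CARD('n)"
proof -
  have psd: "positive_semidef \<rho>" and trace: "(\<Sum>i\<in>UNIV. \<rho> i i) = 1"
    using assms unfolding density_op_iff by blast+
  obtain E where E: "pure_decomposition \<rho> E"
    and rank: "\<forall>(p, \<psi>) \<in> set E. coherence_rank \<psi> \<le> coherence_number \<rho>"
    using coherence_number_attained[OF psd] .
  show ?thesis
    unfolding coherence_fraction_def sesq_def[symmetric]
    using max_coherent_expectation_bound[OF E trace rank] by (intro cSUP_least) auto
qed

end
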